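(* Let $(\varepsilon_k)_{k\ge0}$ be an infinite sequence of real one-particle energies with $\sum_ke^{-\beta\varepsilon_k}<\infty$ for some $\beta>0$. For $N\ge1$ consider the canonical $N$-particle distribution of noninteracting bosons on occupation sequences $(n_k)_{k\ge0}$ of nonnegative integers with $\sum_kn_k=N$, $P_N((n_k))\propto e^{-\beta\sum_k\varepsilon_kn_k}$, and write $\langle n_k\rangle_N$ for its expectations. If $\varepsilon_i<\varepsilon_j$, then $\langle n_j\rangle_N<\langle n_i\rangle_N$. *)

theory Defs
  imports "HOL-Analysis.Analysis"
begin

definition occ_support :: "(nat \<Rightarrow> nat) \<Rightarrow> nat set" where
  "occ_support n = {k. n k \<noteq> 0}"

definition occ_configs :: "nat \<Rightarrow> (nat \<Rightarrow> nat) set" where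
  "occ_configs N = {n. finite (occ_support n) \<and> (\<Sum>k\<in>occ_support n. n k) = N}"

definition boltz_weight :: "real \<Rightarrow> (nat \<Rightarrow> real) \<Rightarrow> (nat \<Rightarrow> nat) \<Rightarrow> real" where
  "boltz_weight \<beta> \<epsilon> n = exp (- \<beta> * (\<Sum>k\<in>occ_support n. \<epsilon> k * real (n k)))"

definition canon_Z :: "real \<Rightarrow> (nat \<Rightarrow> real) \<Rightarrow> nat \<Rightarrow> real" where
  "canon_Z \<beta> \<epsilon> N = (\<Sum>\<^sub>\<infinity>n\<in>occ_configs N. boltz_weight \<beta> \<epsilon> n)"

definition canon_mean_occ :: "real \<Rightarrow> (nat \<Rightarrow> real) \<Rightarrow> nat \<Rightarrow> nat \<Rightarrow> real" where
  "canon_mean_occ \<beta> \<epsilon> N j =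
     (\<Sum>\<^sub>\<infinity>n\<in>occ_configs N. real (n j) * boltz_weight \<beta> \<epsilon> n) / canon_Z \<beta> \<epsilon> N"

end

theory Submission
  imports Defs
begin

text \<open>Swapping the occupation numbers of two levels i and j is a bijection of the
  N-particle configurations that multiplies the Boltzmann weight of n by
  exp(-beta (eps_j - eps_i) (n_i - n_j)). Reindexing the series for the unnormalised
  difference of the means of n_i and n_j by this swap and averaging, each configuration
  contributes t (1 - exp(-beta (eps_j - eps_i) t)) w(n) with t = n_i - n_j, which is
  nonnegative, and the configuration with all particles in level i contributes a
  positive amount. All series converge because every configuration arises by placing N
  labelled particles into levels, and the weight of such a placement is a product of N
  one-particle weights exp(-beta eps_k).\<close>

lemma sum_occ_support_eq:
  assumes "finite T" "occ_support n \<subseteq> T" "\<And>k. n k = 0 \<Longrightarrow> F k = 0"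
  shows "sum F (occ_support n) = sum F T"
  using assms by (intro sum.mono_neutral_left) (auto simp: occ_support_def)

lemma occ_configsI:
  assumes "finite T" "occ_support n \<subseteq> T" "(\<Sum>k\<in>T. n k) = N"
  shows "n \<in> occ_configs N"
  using assms sum_occ_support_eq[OF assms(1,2), of n] finite_subset[OF assms(2,1)]
  by (auto simp: occ_configs_def)

lemma occ_le_total:
  assumes "n \<in> occ_configs N"
  shows "n k \<le> N"
proof (cases "k \<in> occ_support n")
  case True
  then show ?thesis
    using member_le_sum[OF True, of n] assms by (auto simp: occ_configs_def)
qed (auto simp: occ_support_def)

lemma boltz_weight_pos: "0 < boltz_weight \<beta> \<epsilon> n"
  by (simp add: boltz_weight_def)

lemma boltz_weight_superset:
  assumes "finite T" "occ_support n \<subseteq> T"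
  shows "boltz_weight \<beta> \<epsilon> n = exp (- \<beta> * (\<Sum>k\<in>T. \<epsilon> k * real (n k)))"
  using sum_occ_support_eq[OF assms, of "\<lambda>k. \<epsilon> k * real (n k)"]
  by (simp add: boltz_weight_def)

definition occ_of_labels :: "nat \<Rightarrow> (nat \<Rightarrow> nat) \<Rightarrow> nat \<Rightarrow> nat" where
  "occ_of_labels N g k = card {m. m < N \<and> g m = k}"

lemma occ_support_occ_of_labels: "occ_support (occ_of_labels N g) = g ` {..<N}"
  by (auto simp: occ_support_def occ_of_labels_def)

lemma occ_of_labels_in_occ_configs: "occ_of_labels N g \<in> occ_configs N"
proof (rule occ_configsI[of "g ` {..<N}"])
  show "(\<Sum>k\<in>g ` {..<N}. occ_of_labels N g k) = N"
    using sum.image_gen[of "{..<N}" "\<lambda>_. 1::nat" g] by (simp add: occ_of_labels_def)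
qed (auto simp: occ_support_occ_of_labels)

lemma boltz_weight_occ_of_labels:
  "boltz_weight \<beta> \<epsilon> (occ_of_labels N g) = (\<Prod>m<N. exp (- \<beta> * \<epsilon> (g m)))"
proof -
  have "(\<Sum>k\<in>g ` {..<N}. \<epsilon> k * real (occ_of_labels N g k)) = (\<Sum>m<N. \<epsilon> (g m))"
    using sum.image_gen[of "{..<N}" "\<lambda>m. \<epsilon> (g m)" g]
    by (simp add: occ_of_labels_def mult.commute)
  then show ?thesis
    by (simp add: boltz_weight_def occ_support_occ_of_labels exp_sum sum_distrib_left
        flip: sum_negf)
qed

lemma occ_configs_subset_occ_of_labels:
  "occ_configs N \<subseteq> occ_of_labels N ` ({..<N} \<rightarrow>\<^sub>E UNIV)"
proof (induction N)
  case 0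
  have "n = occ_of_labels 0 (\<lambda>_. undefined)" if "n \<in> occ_configs 0" for n
    using that by (auto simp: occ_configs_def occ_support_def occ_of_labels_def)
  then show ?case
    by blast
next
  case (Suc N)
  show ?case
  proof
    fix n assume n: "n \<in> occ_configs (Suc N)"
    let ?T = "occ_support n"
    have fin: "finite ?T" and sum_n: "(\<Sum>k\<in>?T. n k) = Suc N"
      using n by (auto simp: occ_configs_def)
    have "?T \<noteq> {}"
      using sum_n by auto
    then obtain k0 where k0: "k0 \<in> ?T"
      by blast
    define n' where "n' = n(k0 := n k0 - 1)"
    have "(\<Sum>k\<in>?T. n' k) = N"
      using sum_n k0 sum.remove[OF fin k0, of n] sum.remove[OF fin k0, of n']
      by (simp add: n'_def occ_support_def)
    then have "n' \<in> occ_configs N"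
      by (intro occ_configsI[OF fin]) (auto simp: occ_support_def n'_def)
    then obtain g' where g': "g' \<in> {..<N} \<rightarrow>\<^sub>E UNIV" "occ_of_labels N g' = n'"
      using Suc.IH by blast
    define g where "g = g'(N := k0)"
    have "occ_of_labels (Suc N) g k = n k" for k
    proof (cases "k = k0")
      case True
      then have "{m. m < Suc N \<and> g m = k} = insert N {m. m < N \<and> g' m = k}"
        by (auto simp: g_def less_Suc_eq)
      then have "occ_of_labels (Suc N) g k = Suc (occ_of_labels N g' k)"
        by (simp add: occ_of_labels_def)
      then show ?thesis
        using g'(2) k0 True by (simp add: n'_def occ_support_def)
    next
      case False
      then have "{m. m < Suc N \<and> g m = k} = {m. m < N \<and> g' m = k}"
        by (auto simp: g_def less_Suc_eq)
      then have "occ_of_labels (Suc N) g k = occ_of_labels N g' k"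
        by (simp add: occ_of_labels_def)
      then show ?thesis
        using g'(2) False by (simp add: n'_def)
    qed
    moreover have "g \<in> {..<Suc N} \<rightarrow>\<^sub>E UNIV"
      using g'(1) by (auto simp: g_def PiE_def extensional_def)
    ultimately show "n \<in> occ_of_labels (Suc N) ` ({..<Suc N} \<rightarrow>\<^sub>E UNIV)"
      by (intro image_eqI[of _ _ g]) auto
  qed
qed

lemma prod_summable_on_PiE:
  fixes x :: "nat \<Rightarrow> real"
  assumes "summable x" "\<And>k. 0 \<le> x k" "finite A"
  shows "(\<lambda>g. \<Prod>m\<in>A. x (g m)) summable_on A \<rightarrow>\<^sub>E UNIV"
proof -
  have "Infinite_Set_Sum.abs_summable_on x UNIV"
    using assms by (simp add: abs_summable_on_nat_iff')
  then have "Infinite_Set_Sum.abs_summable_on (\<lambda>g. \<Prod>m\<in>A. x (g m)) (A \<rightarrow>\<^sub>E UNIV)"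
    using assms by (intro abs_summable_on_prod_PiE) auto
  then have "Infinite_Sum.abs_summable_on (\<lambda>g. \<Prod>m\<in>A. x (g m)) (A \<rightarrow>\<^sub>E UNIV)"
    by (simp only: abs_summable_equivalent)
  moreover have "\<bar>\<Prod>m\<in>A. x (g m)\<bar> = (\<Prod>m\<in>A. x (g m))" for g
    using assms(2) by (simp add: prod_nonneg)
  ultimately show ?thesis
    by simp
qed

lemma boltz_weight_summable_on:
  assumes "summable (\<lambda>k. exp (- \<beta> * \<epsilon> k))"
  shows "boltz_weight \<beta> \<epsilon> summable_on occ_configs N"
proof -
  define L where "L = {..<N} \<rightarrow>\<^sub>E (UNIV :: nat set)"
  define G where "G = inv_into L (occ_of_labels N)"
  have sub: "occ_configs N \<subseteq> occ_of_labels N ` L"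
    unfolding L_def by (rule occ_configs_subset_occ_of_labels)
  have "(\<lambda>g. boltz_weight \<beta> \<epsilon> (occ_of_labels N g)) summable_on L"
    unfolding boltz_weight_occ_of_labels L_def using assms
    by (intro prod_summable_on_PiE) auto
  then have "(\<lambda>g. boltz_weight \<beta> \<epsilon> (occ_of_labels N g)) summable_on G ` occ_configs N"
    by (rule summable_on_subset_banach) (use sub in \<open>auto simp: G_def inv_into_into\<close>)
  then have "(\<lambda>n. boltz_weight \<beta> \<epsilon> (occ_of_labels N (G n))) summable_on occ_configs N"
    using summable_on_reindex[OF inj_on_inv_into[OF sub],
        of "\<lambda>g. boltz_weight \<beta> \<epsilon> (occ_of_labels N g)"]
    by (simp add: G_def o_def)
  moreover have "boltz_weight \<beta> \<epsilon> (occ_of_labels N (G n)) = boltz_weight \<beta> \<epsilon> n"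
    if "n \<in> occ_configs N" for n
    using sub that by (auto simp: G_def f_inv_into_f)
  ultimately show ?thesis
    by (metis (no_types, lifting) summable_on_cong)
qed

lemma occ_boltz_weight_summable_on:
  assumes "summable (\<lambda>k. exp (- \<beta> * \<epsilon> k))"
  shows "(\<lambda>n. real (n k) * boltz_weight \<beta> \<epsilon> n) summable_on occ_configs N"
proof (rule summable_on_comparison_test)
  show "(\<lambda>n. real N * boltz_weight \<beta> \<epsilon> n) summable_on occ_configs N"
    using boltz_weight_summable_on[OF assms] by (rule summable_on_cmult_right)
  show "real (n k) * boltz_weight \<beta> \<epsilon> n \<le> real N * boltz_weight \<beta> \<epsilon> n"
    if "n \<in> occ_configs N" for n
    using occ_le_total[OF that, of k] boltz_weight_pos[of \<beta> \<epsilon> n] by simp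
qed (simp add: boltz_weight_pos less_imp_le)

lemma canon_Z_pos:
  assumes "summable (\<lambda>k. exp (- \<beta> * \<epsilon> k))"
  shows "0 < canon_Z \<beta> \<epsilon> N"
  unfolding canon_Z_def
  by (rule has_sum_strict_mono[OF has_sum_0 has_sum_infsum[OF boltz_weight_summable_on[OF assms]]
        _ occ_of_labels_in_occ_configs[of N "\<lambda>_. 0"]])
    (auto simp: boltz_weight_pos less_imp_le)

lemma occ_support_comp: "occ_support (n \<circ> p) = p -` occ_support n"
  by (auto simp: occ_support_def)

lemma sum_occ_support_comp_bij:
  assumes "bij p"
  shows "(\<Sum>k\<in>occ_support (n \<circ> p). F (p k)) = sum F (occ_support n)"
proof -
  have "bij_betw p (p -` occ_support n) (occ_support n)"
    using assms by (auto simp: bij_betw_def bij_def inj_on_def)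
  then show ?thesis
    unfolding occ_support_comp by (rule sum.reindex_bij_betw)
qed

lemma comp_bij_in_occ_configs:
  assumes "bij p" "n \<in> occ_configs N"
  shows "n \<circ> p \<in> occ_configs N"
  using assms sum_occ_support_comp_bij[OF assms(1), of n n]
  by (auto simp: occ_configs_def occ_support_comp bij_def intro: finite_vimageI)

lemma bij_betw_comp_occ_configs:
  assumes "bij p"
  shows "bij_betw (\<lambda>n. n \<circ> p) (occ_configs N) (occ_configs N)"
proof (rule bij_betw_byWitness[where f' = "\<lambda>n. n \<circ> inv p"])
  show "(\<lambda>n. n \<circ> p) ` occ_configs N \<subseteq> occ_configs N"
    using assms by (auto intro: comp_bij_in_occ_configs)
  show "(\<lambda>n. n \<circ> inv p) ` occ_configs N \<subseteq> occ_configs N"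
    using assms by (auto intro: comp_bij_in_occ_configs bij_imp_bij_inv)
qed (use assms in \<open>auto simp: comp_assoc inv_o_cancel bij_is_inj
      bij_is_surj[THEN surj_iff[THEN iffD1]]\<close>)

lemma boltz_weight_comp_bij:
  assumes "bij p"
  shows "boltz_weight \<beta> \<epsilon> (n \<circ> p) = boltz_weight \<beta> (\<epsilon> \<circ> inv p) n"
  using sum_occ_support_comp_bij[OF assms, of "\<lambda>k. \<epsilon> (inv p k) * real (n k)" n] assms
  by (simp add: boltz_weight_def bij_is_inj)

lemma sum_transpose_mult:
  fixes a b :: "'a \<Rightarrow> 'b :: comm_ring_1"
  assumes "finite T" "i \<in> T" "j \<in> T"
  shows "(\<Sum>k\<in>T. a (Transposition.transpose i j k) * b k)
       = (\<Sum>k\<in>T. a k * b k) + (a j - a i) * (b i - b j)"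
proof (cases "i = j")
  case False
  have rest: "(\<Sum>k\<in>T - {i, j}. a (Transposition.transpose i j k) * b k)
      = (\<Sum>k\<in>T - {i, j}. a k * b k)"
    by (rule sum.cong) auto
  have split: "sum f T = f i + f j + sum f (T - {i, j})" for f :: "'a \<Rightarrow> 'b"
  proof -
    have "sum f T = f i + sum f (T - {i})"
      by (rule sum.remove[OF assms(1,2)])
    also have "sum f (T - {i}) = f j + sum f (T - {i} - {j})"
      using assms False by (intro sum.remove) auto
    also have "T - {i} - {j} = T - {i, j}"
      by auto
    finally show ?thesis
      by (simp add: add.assoc)
  qed
  show ?thesis
    unfolding split[of "\<lambda>k. a (Transposition.transpose i j k) * b k"]
      split[of "\<lambda>k. a k * b k"] rest
    using False by (simp add: algebra_simps)
qed simp

lemma boltz_weight_comp_transpose: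
  assumes "finite (occ_support n)"
  shows "boltz_weight \<beta> \<epsilon> (n \<circ> Transposition.transpose i j)
       = boltz_weight \<beta> \<epsilon> n * exp (- \<beta> * (\<epsilon> j - \<epsilon> i) * (real (n i) - real (n j)))"
proof -
  define T where "T = occ_support n \<union> {i, j}"
  have T: "finite T" "occ_support n \<subseteq> T" "i \<in> T" "j \<in> T"
    using assms by (auto simp: T_def)
  have energy: "(\<Sum>k\<in>T. (\<epsilon> \<circ> Transposition.transpose i j) k * real (n k))
      = (\<Sum>k\<in>T. \<epsilon> k * real (n k)) + (\<epsilon> j - \<epsilon> i) * (real (n i) - real (n j))"
    using sum_transpose_mult[OF T(1,3,4), of \<epsilon> "\<lambda>k. real (n k)"] by simp
  show ?thesis
    unfolding boltz_weight_comp_bij[OF bij_transpose] inv_transpose_eq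
      boltz_weight_superset[OF T(1,2)] energy
    by (simp add: algebra_simps flip: exp_add)
qed

lemma mult_one_minus_exp_nonneg:
  fixes c t :: real
  assumes "0 < c"
  shows "0 \<le> t * (1 - exp (- c * t))"
proof (cases "0 \<le> t")
  case True
  then have "exp (- c * t) \<le> 1"
    using assms by simp
  then show ?thesis
    using True by simp
next
  case False
  then have "1 \<le> exp (- c * t)"
    using assms by (simp add: mult_pos_neg less_imp_le)
  then show ?thesis
    using False by (simp add: mult_nonpos_nonpos)
qed

lemma occ_moment_less:
  fixes \<epsilon> :: "nat \<Rightarrow> real"
  assumes "0 < \<beta>" "summable (\<lambda>k. exp (- \<beta> * \<epsilon> k))" "1 \<le> N" "\<epsilon> i < \<epsilon> j"
  shows "(\<Sum>\<^sub>\<infinity>n\<in>occ_configs N. real (n j) * boltz_weight \<beta> \<epsilon> n)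
       < (\<Sum>\<^sub>\<infinity>n\<in>occ_configs N. real (n i) * boltz_weight \<beta> \<epsilon> n)"
    (is "?b < ?a")
proof -
  define \<tau> where "\<tau> = Transposition.transpose i j"
  define f where "f n = (real (n i) - real (n j)) * boltz_weight \<beta> \<epsilon> n" for n :: "nat \<Rightarrow> nat"
  have "((\<lambda>n. real (n i) * boltz_weight \<beta> \<epsilon> n + - (real (n j) * boltz_weight \<beta> \<epsilon> n))
      has_sum (?a + - ?b)) (occ_configs N)"
    by (intro has_sum_add has_sum_uminusI has_sum_infsum occ_boltz_weight_summable_on assms(2))
  then have "(f has_sum (?a - ?b)) (occ_configs N)"
    by (simp add: f_def[abs_def] left_diff_distrib)
  moreover from this have "((\<lambda>n. f (n \<circ> \<tau>)) has_sum (?a - ?b)) (occ_configs N)"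
    using has_sum_reindex_bij_betw[OF bij_betw_comp_occ_configs[OF bij_transpose], of f]
    by (simp add: \<tau>_def)
  ultimately have sum_pairs:
    "((\<lambda>n. f n + f (n \<circ> \<tau>)) has_sum (?a - ?b) + (?a - ?b)) (occ_configs N)"
    by (rule has_sum_add)
  have pair: "f n + f (n \<circ> \<tau>) = (real (n i) - real (n j))
      * (1 - exp (- (\<beta> * (\<epsilon> j - \<epsilon> i)) * (real (n i) - real (n j))))
      * boltz_weight \<beta> \<epsilon> n"
    if "n \<in> occ_configs N" for n
    using that boltz_weight_comp_transpose[of n \<beta> \<epsilon> i j]
    by (simp add: f_def \<tau>_def occ_configs_def algebra_simps)
  have pair_nonneg: "0 \<le> f n + f (n \<circ> \<tau>)" if "n \<in> occ_configs N" for n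
    unfolding pair[OF that] using assms(1,4) boltz_weight_pos[of \<beta> \<epsilon> n]
    by (intro mult_nonneg_nonneg mult_one_minus_exp_nonneg) auto
  define e where "e = occ_of_labels N (\<lambda>_. i)"
  have e: "e \<in> occ_configs N" "e i = N" "e j = 0"
    using assms(4) by (auto simp: e_def occ_of_labels_in_occ_configs occ_of_labels_def)
  have "0 < \<beta> * (\<epsilon> j - \<epsilon> i) * real N"
    using assms by simp
  then have "0 < f e + f (e \<circ> \<tau>)"
    unfolding pair[OF e(1)] e(2,3) using assms(3) boltz_weight_pos[of \<beta> \<epsilon> e]
    by (intro mult_pos_pos) auto
  then have "0 < (?a - ?b) + (?a - ?b)"
    using has_sum_strict_mono[OF has_sum_0 sum_pairs pair_nonneg e(1)] by simp
  then show ?thesis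
    by simp
qed

theorem lemma6:
  fixes \<epsilon> :: "nat \<Rightarrow> real" and \<beta> :: real and N i j :: nat
  assumes "\<beta> > 0"
    and "summable (\<lambda>k. exp (- \<beta> * \<epsilon> k))"
    and "N \<ge> 1"
    and "\<epsilon> i < \<epsilon> j"
  shows "canon_mean_occ \<beta> \<epsilon> N j < canon_mean_occ \<beta> \<epsilon> N i"
  unfolding canon_mean_occ_def
  using occ_moment_less[OF assms] canon_Z_pos[OF assms(2)]
  by (rule divide_strict_right_mono)

end
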